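(* Let $q=p^\ell$ be a prime power with $p$ prime and $d$ a positive integer; write $d+1=s(q-q/p)+r$ with integers $s\ge0$, $0\le r<q-q/p$. Let $k\ge s+1$ and define $e^\star\in\{0,\dots,q-1\}^k$ by $e^\star_i=q-q/p$ for $1\le i\le s$, $e^\star_{s+1}=q-1$, and $e^\star_j=0$ for $j\ge s+2$; let $d^\star=|e^\star|_1$. Then for every function $g:\mathbb{F}_q^k\to\mathbb{F}_q$ of degree at most $d^\star-1$, $$\Pr_{\alpha\in\mathbb{F}_q^k}\left[g(\alpha)\neq\alpha^{e^\star}\right]\geq\frac{1}{q^{s+1}},$$ where $\alpha$ is uniform in $\mathbb{F}_q^k$.
   Context: For $\alpha\in\mathbb{F}_q^k$ and $e\in\{0,\dots,q-1\}^k$, $\alpha^e=\prod_i\alpha_i^{e_i}$ (with $0^0=1$). The degree of a function $\mathbb{F}_q^k\to\mathbb{F}_q$ is the total degree of its unique polynomial representation with individual degrees at most $q-1$. *)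

theory Defs
  imports Complex_Main "HOL-Computational_Algebra.Primes" "HOL-Library.FuncSet" "HOL-Library.Cardinality"
begin

text \<open>Points of F_q^k are represented as functions nat \<Rightarrow> 'a, extensional on {0..<k}.\<close>
definition points :: "nat \<Rightarrow> (nat \<Rightarrow> 'a) set" where
  "points k = PiE {0..<k} (\<lambda>_. UNIV)"

definition exps :: "nat \<Rightarrow> nat \<Rightarrow> (nat \<Rightarrow> nat) set" where
  "exps q k = PiE {0..<k} (\<lambda>_. {0..<q})"

text \<open>Monomial alpha^e = prod_i alpha_i^(e_i), with 0^0 = 1.\<close>
definition mon :: "nat \<Rightarrow> (nat \<Rightarrow> 'a::comm_ring_1) \<Rightarrow> (nat \<Rightarrow> nat) \<Rightarrow> 'a" where
  "mon k \<alpha> e = (\<Prod>i<k. \<alpha> i ^ e i)"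

text \<open>A function F_q^k \<rightarrow> F_q has degree at most D iff its unique reduced
  polynomial representation (individual degrees \<le> q-1) only uses monomials of
  total degree \<le> D.\<close>
definition fun_deg_le :: "nat \<Rightarrow> ((nat \<Rightarrow> 'a::{field,finite}) \<Rightarrow> 'a) \<Rightarrow> nat \<Rightarrow> bool" where
  "fun_deg_le k g D \<longleftrightarrow>
     (\<exists>c. \<forall>\<alpha>\<in>points k.
        g \<alpha> = (\<Sum>e\<in>{e\<in>exps (CARD('a)) k. (\<Sum>i<k. e i) \<le> D}. c e * mon k \<alpha> e))"

end

theory Submission
  imports Defs "HOL-Computational_Algebra.Polynomial" "HOL-Analysis.Convex"
begin

text \<open>The function \<alpha>^e* - g has a reduced representation whose coefficient at e* is 1
  and whose monomials all have total degree at most d* \<le> (s + 1)(q - 1). A reduced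
  polynomial c \<noteq> 0 is nonzero at no fewer than \<Prod>_i (q - e_i) points, where e is the largest
  exponent with c e \<noteq> 0 in the lexicographic order that compares the last variable first:
  by induction the top coefficient in the last variable is nonzero at \<Prod>_{i<k-1} (q - e_i)
  points, and at each of these the remaining univariate polynomial, of degree e_{k-1}, has at
  least q - e_{k-1} nonroots. Convexity of x \<mapsto> q^x gives q - e \<ge> q^(1 - e/(q - 1)), so under
  the degree bound the product is at least q^(k - s - 1).\<close>

definition reduced_eval ::
    "nat \<Rightarrow> nat \<Rightarrow> ((nat \<Rightarrow> nat) \<Rightarrow> 'a) \<Rightarrow> (nat \<Rightarrow> 'a) \<Rightarrow> 'a::comm_ring_1"
  where "reduced_eval q k c \<alpha> = (\<Sum>e\<in>exps q k. c e * mon k \<alpha> e)"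

lemma two_le_card_field: "2 \<le> CARD('a::{field,finite})"
proof -
  have "card {0::'a, 1} \<le> CARD('a)" by (rule card_mono) auto
  then show ?thesis by simp
qed

lemma finite_exps: "finite (exps q k)"
  unfolding exps_def by (intro finite_PiE) auto

lemma finite_points: "finite (points k :: (nat \<Rightarrow> 'a::finite) set)"
  unfolding points_def by (intro finite_PiE) auto

lemma card_points: "card (points k :: (nat \<Rightarrow> 'a::finite) set) = CARD('a) ^ k"
  unfolding points_def by (simp add: card_PiE)

lemma points_Suc_fun_upd: "\<alpha> \<in> points k \<Longrightarrow> \<alpha>(k := t) \<in> points (Suc k)"
  unfolding points_def by (auto simp: PiE_iff extensional_def)

lemma exps_Suc: "exps q (Suc k) = (\<lambda>(j, e). e(k := j)) ` ({0..<q} \<times> exps q k)"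
  unfolding exps_def by (simp add: atLeast0_lessThan_Suc PiE_insert_eq)

lemma inj_on_exps_Suc: "inj_on (\<lambda>(j, e). e(k := j)) ({0..<q} \<times> exps q k)"
  unfolding exps_def by (rule inj_combinator) simp

lemma mon_Suc_fun_upd: "mon (Suc k) \<alpha> (e(k := j)) = mon k \<alpha> e * \<alpha> k ^ j"
  unfolding mon_def by (simp add: lessThan_Suc)

lemma mon_restrict: "mon k \<alpha> (restrict e {0..<k}) = mon k \<alpha> e"
  unfolding mon_def by (auto intro!: prod.cong)

lemma reduced_eval_indicator:
  "e \<in> exps q k \<Longrightarrow> reduced_eval q k (\<lambda>e'. of_bool (e' = e)) \<alpha> = mon k \<alpha> e"
  unfolding reduced_eval_def by (simp add: finite_exps Int_absorb1)

lemma reduced_eval_diff: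
  "reduced_eval q k (\<lambda>e. c e - c' e) \<alpha> = reduced_eval q k c \<alpha> - reduced_eval q k c' \<alpha>"
  unfolding reduced_eval_def by (simp add: left_diff_distrib sum_subtractf)

lemma reduced_eval_fun_upd: "reduced_eval q k c (\<alpha>(k := t)) = reduced_eval q k c \<alpha>"
  unfolding reduced_eval_def mon_def by (auto intro!: sum.cong prod.cong)

lemma reduced_eval_Suc:
  "reduced_eval q (Suc k) c \<alpha> = (\<Sum>j<q. \<alpha> k ^ j * reduced_eval q k (\<lambda>e. c (e(k := j))) \<alpha>)"
proof -
  have "reduced_eval q (Suc k) c \<alpha> =
      (\<Sum>(j, e)\<in>{0..<q} \<times> exps q k. c (e(k := j)) * mon (Suc k) \<alpha> (e(k := j)))"
    unfolding reduced_eval_def exps_Suc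
    by (subst sum.reindex[OF inj_on_exps_Suc]) (simp add: case_prod_beta)
  also have "\<dots> = (\<Sum>j\<in>{0..<q}. \<Sum>e\<in>exps q k. c (e(k := j)) * (mon k \<alpha> e * \<alpha> k ^ j))"
    by (subst sum.cartesian_product[symmetric]) (simp add: mon_Suc_fun_upd)
  also have "\<dots> = (\<Sum>j<q. \<alpha> k ^ j * reduced_eval q k (\<lambda>e. c (e(k := j))) \<alpha>)"
    unfolding reduced_eval_def
    by (auto simp: sum_distrib_left atLeast0LessThan mult_ac intro!: sum.cong)
  finally show ?thesis .
qed

lemma fun_deg_le_reduced_eval:
  fixes g :: "(nat \<Rightarrow> 'a::{field,finite}) \<Rightarrow> 'a"
  assumes "fun_deg_le k g D"
  obtains c where "\<And>e. c e \<noteq> 0 \<Longrightarrow> (\<Sum>i<k. e i) \<le> D"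
    and "\<And>\<alpha>. \<alpha> \<in> points k \<Longrightarrow> g \<alpha> = reduced_eval CARD('a) k c \<alpha>"
proof -
  obtain c where c: "\<And>\<alpha>. \<alpha> \<in> points k \<Longrightarrow>
      g \<alpha> = (\<Sum>e\<in>{e\<in>exps CARD('a) k. (\<Sum>i<k. e i) \<le> D}. c e * mon k \<alpha> e)"
    using assms unfolding fun_deg_le_def by blast
  show thesis
  proof
    show "(\<Sum>i<k. e i) \<le> D" if "(if (\<Sum>i<k. e i) \<le> D then c e else 0) \<noteq> 0" for e
      using that by (simp split: if_splits)
    show "g \<alpha> = reduced_eval CARD('a) k (\<lambda>e. if (\<Sum>i<k. e i) \<le> D then c e else 0) \<alpha>"
      if "\<alpha> \<in> points k" for \<alpha>
      unfolding c[OF that] reduced_eval_def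
      by (auto simp: sum.inter_filter finite_exps intro!: sum.cong)
  qed
qed

lemma card_nonroots_ge:
  fixes p :: "'a::{idom,finite} poly"
  assumes "p \<noteq> 0"
  shows "CARD('a) - degree p \<le> card {x. poly p x \<noteq> 0}"
proof -
  have "{x. poly p x \<noteq> 0} = UNIV - {x. poly p x = 0}" by auto
  then have "card {x. poly p x \<noteq> 0} = CARD('a) - card {x. poly p x = 0}"
    by (simp add: card_Diff_subset)
  then show ?thesis using card_poly_roots_bound[OF assms] by linarith
qed

lemma card_nonzeros_power_sum_ge:
  fixes a :: "nat \<Rightarrow> 'a::{idom,finite}"
  assumes "a j \<noteq> 0" "\<And>i. j < i \<Longrightarrow> a i = 0" "j < n"
  shows "CARD('a) - j \<le> card {t. (\<Sum>i<n. t ^ i * a i) \<noteq> 0}"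
proof -
  define p where "p = (\<Sum>i\<le>j. monom (a i) i)"
  have "(\<Sum>i<n. t ^ i * a i) = (\<Sum>i\<le>j. t ^ i * a i)" for t
    using assms by (intro sum.mono_neutral_right) auto
  then have poly_p: "(\<Sum>i<n. t ^ i * a i) = poly p t" for t
    unfolding p_def by (simp add: poly_sum poly_monom mult.commute)
  have "coeff p j = a j" unfolding p_def by (simp add: coeff_sum)
  then have "p \<noteq> 0" using assms(1) by auto
  moreover have "degree p \<le> j" unfolding p_def
    by (intro degree_sum_le) (auto intro: order_trans[OF degree_monom_le])
  ultimately show ?thesis
    unfolding poly_p using card_nonroots_ge[of p] by linarith
qed

lemma card_points_Suc_ge:
  fixes A :: "(nat \<Rightarrow> 'a::finite) set"
  assumes "A \<subseteq> points k" "\<And>\<alpha>. \<alpha> \<in> A \<Longrightarrow> m \<le> card {t. P (\<alpha>(k := t))}"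
  shows "card A * m \<le> card {\<beta>\<in>points (Suc k). P \<beta>}"
proof -
  define T where "T \<alpha> = {t. P (\<alpha>(k := t))}" for \<alpha>
  have "inj_on (\<lambda>(\<alpha>, t). \<alpha>(k := t)) (Sigma A T)"
  proof (rule inj_onI, clarify)
    fix \<alpha> t \<beta> u assume "\<alpha> \<in> A" "\<beta> \<in> A" and upd: "\<alpha>(k := t) = \<beta>(k := u)"
    then have "\<alpha> k = \<beta> k"
      using assms(1) unfolding points_def by (metis PiE_arb atLeastLessThan_iff less_irrefl subsetD)
    then show "\<alpha> = \<beta> \<and> t = u" using upd by (metis fun_upd_apply fun_upd_triv fun_upd_upd)
  qed
  have "card A * m \<le> (\<Sum>\<alpha>\<in>A. card (T \<alpha>))"
    using assms(2) sum_mono[of A "\<lambda>_. m"] unfolding T_def by simp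
  also have "\<dots> = card ((\<lambda>(\<alpha>, t). \<alpha>(k := t)) ` Sigma A T)"
    using \<open>inj_on _ _\<close> finite_subset[OF assms(1) finite_points] by (simp add: card_image card_SigmaI)
  also have "\<dots> \<le> card {\<beta>\<in>points (Suc k). P \<beta>}"
    using assms(1) finite_points[of "Suc k"] unfolding T_def
    by (auto intro!: card_mono points_Suc_fun_upd)
  finally show ?thesis .
qed

lemma obtain_max_last_exponent:
  assumes "e0 \<in> exps q (Suc k)" "c e0 \<noteq> 0"
  obtains j where "j < q" "\<exists>e\<in>exps q k. c (e(k := j)) \<noteq> 0"
    "\<And>i e. j < i \<Longrightarrow> i < q \<Longrightarrow> e \<in> exps q k \<Longrightarrow> c (e(k := i)) = 0"
proof -
  define J where "J = {j\<in>{0..<q}. \<exists>e\<in>exps q k. c (e(k := j)) \<noteq> 0}"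
  have "J \<noteq> {}" using assms unfolding J_def exps_Suc by auto
  moreover have "finite J" unfolding J_def by auto
  ultimately have "Max J \<in> J" and Max_ge: "\<And>i. i \<in> J \<Longrightarrow> i \<le> Max J" by auto
  then have "Max J < q" "\<exists>e\<in>exps q k. c (e(k := Max J)) \<noteq> 0" unfolding J_def by auto
  moreover have "c (e(k := i)) = 0" if "Max J < i" "i < q" "e \<in> exps q k" for i e
  proof (rule ccontr)
    assume "c (e(k := i)) \<noteq> 0"
    then have "i \<in> J" using that(2,3) unfolding J_def by auto
    then show False using Max_ge[of i] that(1) by simp
  qed
  ultimately show thesis by (rule that)
qed

lemma card_nonzeros_reduced_eval_ge_prod:
  fixes c :: "(nat \<Rightarrow> nat) \<Rightarrow> 'a::{field,finite}"
  assumes "e0 \<in> exps CARD('a) k" "c e0 \<noteq> 0"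
  shows "\<exists>e\<in>exps CARD('a) k. c e \<noteq> 0 \<and>
    (\<Prod>i<k. CARD('a) - e i) \<le> card {\<alpha>\<in>points k. reduced_eval CARD('a) k c \<alpha> \<noteq> 0}"
  using assms
proof (induction k arbitrary: c e0)
  case 0
  then have "reduced_eval CARD('a) 0 c \<alpha> = c e0" for \<alpha> :: "nat \<Rightarrow> 'a"
    by (simp add: reduced_eval_def exps_def mon_def)
  then show ?case using 0 by (auto simp: points_def)
next
  case (Suc k)
  define q where "q = CARD('a)"
  define C where "C j e = c (e(k := j))" for j e
  obtain j where j: "j < q" "\<exists>e\<in>exps q k. C j e \<noteq> 0"
    and above: "\<And>i e. j < i \<Longrightarrow> i < q \<Longrightarrow> e \<in> exps q k \<Longrightarrow> C i e = 0"
    using obtain_max_last_exponent[of e0 q k c] Suc.prems unfolding C_def q_def by blast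
  obtain e where e: "e \<in> exps q k" "C j e \<noteq> 0"
    and card_top: "(\<Prod>i<k. q - e i) \<le> card {\<alpha>\<in>points k. reduced_eval q k (C j) \<alpha> \<noteq> 0}"
    using j(2) Suc.IH unfolding q_def by blast
  have nonroots: "q - j \<le> card {t. reduced_eval q (Suc k) c (\<alpha>(k := t)) \<noteq> 0}"
    if "reduced_eval q k (C j) \<alpha> \<noteq> 0" for \<alpha>
  proof -
    define a where "a i = (if i < q then reduced_eval q k (C i) \<alpha> else 0)" for i
    have "reduced_eval q (Suc k) c (\<alpha>(k := t)) = (\<Sum>i<q. t ^ i * a i)" for t
      unfolding reduced_eval_Suc reduced_eval_fun_upd a_def C_def by simp
    moreover have "a i = 0" if "j < i" for i
      using above[OF that] unfolding a_def reduced_eval_def by simp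
    ultimately show ?thesis
      using card_nonzeros_power_sum_ge[of a j q] that j(1) unfolding a_def q_def by simp
  qed
  have "(\<Prod>i<k. q - (e(k := j)) i) = (\<Prod>i<k. q - e i)" by (intro prod.cong) auto
  then have "(\<Prod>i<Suc k. q - (e(k := j)) i) = (\<Prod>i<k. q - e i) * (q - j)" by simp
  also have "\<dots> \<le> card {\<alpha>\<in>points k. reduced_eval q k (C j) \<alpha> \<noteq> 0} * (q - j)"
    using card_top by (rule mult_le_mono1)
  also have "\<dots> \<le> card {\<beta>\<in>points (Suc k). reduced_eval q (Suc k) c \<beta> \<noteq> 0}"
    using nonroots by (intro card_points_Suc_ge) auto
  finally have "(\<Prod>i<Suc k. q - (e(k := j)) i)
      \<le> card {\<beta>\<in>points (Suc k). reduced_eval q (Suc k) c \<beta> \<noteq> 0}" .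
  moreover have "e(k := j) \<in> exps q (Suc k)" using e(1) j(1) unfolding exps_Suc by auto
  moreover have "c (e(k := j)) \<noteq> 0" using e(2) unfolding C_def .
  ultimately show ?case unfolding q_def by blast
qed

lemma powr_le_chord:
  fixes q x :: real
  assumes "0 < q" "0 \<le> x" "x \<le> 1"
  shows "q powr x \<le> 1 + x * (q - 1)"
proof -
  have "exp ((1 - x) *\<^sub>R 0 + x *\<^sub>R ln q) \<le> (1 - x) * exp 0 + x * exp (ln q)"
    using convex_onD[OF exp_convex] assms by blast
  then show ?thesis using assms by (simp add: powr_def algebra_simps)
qed

lemma power_le_prod_diff:
  fixes q m :: nat and e :: "nat \<Rightarrow> nat"
  assumes "2 \<le> q" "\<And>i. i < k \<Longrightarrow> e i < q" "(\<Sum>i<k. e i) \<le> m * (q - 1)" "m \<le> k"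
  shows "q ^ (k - m) \<le> (\<Prod>i<k. q - e i)"
proof -
  define x where "x i = 1 - real (e i) / (real q - 1)" for i
  have "(\<Sum>i<k. real (e i)) \<le> real (m * (q - 1))"
    using assms(3) by (metis of_nat_le_iff of_nat_sum)
  also have "\<dots> = real m * (real q - 1)" using assms(1) by (simp add: of_nat_diff)
  finally have "(\<Sum>i<k. real (e i)) / (real q - 1) \<le> real m"
    using assms(1) by (simp add: pos_divide_le_eq)
  moreover have "(\<Sum>i<k. x i) = real k - (\<Sum>i<k. real (e i)) / (real q - 1)"
    by (simp add: x_def sum_subtractf sum_divide_distrib)
  ultimately have "real q ^ (k - m) \<le> real q powr (\<Sum>i<k. x i)"
    using assms(1,4) by (simp add: powr_realpow[symmetric] of_nat_diff)
  also have "\<dots> = (\<Prod>i<k. real q powr x i)"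
    using assms(1) by (simp add: powr_sum)
  also have "\<dots> \<le> (\<Prod>i<k. real (q - e i))"
  proof (rule prod_mono)
    fix i assume "i \<in> {..<k}"
    then have "e i < q" using assms(2) by simp
    then have "0 \<le> x i" "x i \<le> 1" "1 + x i * (real q - 1) = real (q - e i)"
      using assms(1) by (auto simp: x_def field_simps of_nat_diff)
    then show "0 \<le> real q powr x i \<and> real q powr x i \<le> real (q - e i)"
      using powr_le_chord[of "real q" "x i"] assms(1) by simp
  qed
  finally show ?thesis by (simp flip: of_nat_power of_nat_prod)
qed

lemma card_nonzeros_reduced_eval_ge:
  fixes c :: "(nat \<Rightarrow> nat) \<Rightarrow> 'a::{field,finite}"
  assumes "e0 \<in> exps CARD('a) k" "c e0 \<noteq> 0"
    and "\<And>e. c e \<noteq> 0 \<Longrightarrow> (\<Sum>i<k. e i) \<le> m * (CARD('a) - 1)" and "m \<le> k"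
  shows "CARD('a) ^ (k - m) \<le> card {\<alpha>\<in>points k. reduced_eval CARD('a) k c \<alpha> \<noteq> 0}"
proof -
  obtain e where "e \<in> exps CARD('a) k" "c e \<noteq> 0"
    and "(\<Prod>i<k. CARD('a) - e i) \<le> card {\<alpha>\<in>points k. reduced_eval CARD('a) k c \<alpha> \<noteq> 0}"
    using card_nonzeros_reduced_eval_ge_prod[of e0 k c] assms(1,2) by blast
  moreover have "CARD('a) ^ (k - m) \<le> (\<Prod>i<k. CARD('a) - e i)"
  proof (rule power_le_prod_diff[OF two_le_card_field _ _ assms(4)])
    show "e i < CARD('a)" if "i < k" for i
      using \<open>e \<in> exps CARD('a) k\<close> that by (auto simp: exps_def PiE_iff)
    show "(\<Sum>i<k. e i) \<le> m * (CARD('a) - 1)" using assms(3) \<open>c e \<noteq> 0\<close> .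
  qed
  ultimately show ?thesis by linarith
qed

lemma prime_power_div_ge_one:
  fixes p l :: nat
  assumes "prime p" "2 \<le> p ^ l"
  shows "1 \<le> p ^ l div p"
proof -
  have "l \<noteq> 0" using assms(2) by (cases l) auto
  then show ?thesis using assms(1) prime_gt_1_nat[OF assms(1)] by (cases l) auto
qed

lemma sum_lessThan_le_of_bounded_support:
  fixes e :: "nat \<Rightarrow> nat"
  assumes "\<And>i. e i \<le> (if i \<le> s then b else 0)" "s < k"
  shows "(\<Sum>i<k. e i) \<le> (s + 1) * b"
proof -
  have "(\<Sum>i<k. e i) \<le> (\<Sum>i<k. if i \<le> s then b else 0)" by (intro sum_mono assms(1))
  also have "\<dots> = (\<Sum>i\<le>s. b)"
    using assms(2) by (intro sum.mono_neutral_cong_right) auto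
  finally show ?thesis by simp
qed

lemma card_mon_disagreements_ge:
  fixes g :: "(nat \<Rightarrow> 'a::{field,finite}) \<Rightarrow> 'a" and e :: "nat \<Rightarrow> nat"
  assumes "\<And>i. e i < CARD('a)" "0 < (\<Sum>i<k. e i)"
    and "(\<Sum>i<k. e i) \<le> m * (CARD('a) - 1)" "m \<le> k"
    and "fun_deg_le k g ((\<Sum>i<k. e i) - 1)"
  shows "CARD('a) ^ (k - m) \<le> card {\<alpha>\<in>points k. g \<alpha> \<noteq> mon k \<alpha> e}"
proof -
  define e0 where "e0 = restrict e {0..<k}"
  have e0_exps: "e0 \<in> exps CARD('a) k"
    using assms(1) unfolding e0_def exps_def by (auto simp: PiE_iff)
  have deg_e0: "(\<Sum>i<k. e0 i) = (\<Sum>i<k. e i)" unfolding e0_def by simp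
  obtain c where c_deg: "\<And>b. c b \<noteq> 0 \<Longrightarrow> (\<Sum>i<k. b i) \<le> (\<Sum>i<k. e i) - 1"
    and g_eq: "\<And>\<alpha>. \<alpha> \<in> points k \<Longrightarrow> g \<alpha> = reduced_eval CARD('a) k c \<alpha>"
    using fun_deg_le_reduced_eval[OF assms(5)] by blast
  define f where "f = (\<lambda>b. of_bool (b = e0) - c b)"
  have "reduced_eval CARD('a) k f \<alpha> = mon k \<alpha> e0 - reduced_eval CARD('a) k c \<alpha>" for \<alpha>
    unfolding f_def reduced_eval_diff reduced_eval_indicator[OF e0_exps] ..
  then have "reduced_eval CARD('a) k f \<alpha> = mon k \<alpha> e - g \<alpha>" if "\<alpha> \<in> points k" for \<alpha>
    using g_eq[OF that] by (simp add: e0_def mon_restrict)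
  then have nonzeros:
    "{\<alpha>\<in>points k. g \<alpha> \<noteq> mon k \<alpha> e} = {\<alpha>\<in>points k. reduced_eval CARD('a) k f \<alpha> \<noteq> 0}"
    by auto
  have "c e0 = 0" using c_deg[of e0] deg_e0 assms(2) by linarith
  then have "f e0 \<noteq> 0" by (simp add: f_def)
  have f_deg: "(\<Sum>i<k. b i) \<le> m * (CARD('a) - 1)" if "f b \<noteq> 0" for b
  proof (cases "b = e0")
    case True
    then show ?thesis using deg_e0 assms(3) by simp
  next
    case False
    then have "c b \<noteq> 0" using that by (simp add: f_def)
    then show ?thesis using c_deg[of b] assms(3) by linarith
  qed
  show ?thesis
    unfolding nonzeros
    by (rule card_nonzeros_reduced_eval_ge[of e0 k f, OF e0_exps \<open>f e0 \<noteq> 0\<close> f_deg assms(4)])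
qed

theorem lemma4p2:
  fixes g :: "(nat \<Rightarrow> 'a::{field,finite}) \<Rightarrow> 'a"
    and p l d s r k dstar :: nat and estar :: "nat \<Rightarrow> nat"
  assumes "prime p"
    and "CARD('a) = p ^ l"
    and "d > 0"
    and "d + 1 = s * (CARD('a) - CARD('a) div p) + r"
    and "r < CARD('a) - CARD('a) div p"
    and "k \<ge> s + 1"
    and "estar = (\<lambda>i. if i < s then CARD('a) - CARD('a) div p
                       else if i = s then CARD('a) - 1 else 0)"
    and "dstar = (\<Sum>i<k. estar i)"
    and "fun_deg_le k g (dstar - 1)"
  shows "real (card {\<alpha>\<in>points k. g \<alpha> \<noteq> mon k \<alpha> estar}) / real (card (points k :: (nat \<Rightarrow> 'a) set))
           \<ge> 1 / real (CARD('a)) ^ (s + 1)"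
proof -
  define q where "q = CARD('a)"
  have q2: "2 \<le> q" unfolding q_def by (rule two_le_card_field)
  have "1 \<le> q div p" using prime_power_div_ge_one assms(1,2) q2 unfolding q_def by metis
  then have estar_le: "estar i \<le> (if i \<le> s then q - 1 else 0)" for i
    unfolding assms(7) q_def by auto
  have estar_lt: "estar i < q" for i
    using estar_le[of i] q2 by (auto split: if_split_asm)
  have "estar s \<le> dstar" unfolding assms(8) using assms(6) by (intro member_le_sum) auto
  then have dstar_pos: "0 < dstar" using q2 unfolding assms(7) q_def by simp
  have dstar_le: "dstar \<le> (s + 1) * (q - 1)"
    unfolding assms(8) using estar_le assms(6) by (intro sum_lessThan_le_of_bounded_support) auto
  have "q ^ (k - (s + 1)) \<le> card {\<alpha>\<in>points k. g \<alpha> \<noteq> mon k \<alpha> estar}"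
    using card_mon_disagreements_ge[of estar k "s + 1" g] estar_lt dstar_pos dstar_le assms(6,8,9)
    unfolding q_def by simp
  then have "real q ^ (k - (s + 1)) / real q ^ k
      \<le> real (card {\<alpha>\<in>points k. g \<alpha> \<noteq> mon k \<alpha> estar}) / real q ^ k"
    by (intro divide_right_mono) (simp_all flip: of_nat_power)
  moreover have "real q ^ (k - (s + 1)) / real q ^ k = 1 / real q ^ (s + 1)"
    using assms(6) q2 by (simp add: power_diff)
  ultimately show ?thesis by (simp add: card_points q_def)
qed

end
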